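(* The initial algebra of the endofunctor $F=M\otimes-$ on $\mathbf{Met_3}^{C}$ is $(G_\rho,g)$, where $G_\rho$ is the carrier $G$ of the initial $F$-algebra $(G,g)$ in $\mathbf{Set_3}$ equipped with the discrete metric, and $g\colon M\otimes G_\rho\to G_\rho$ is the same structure map as in $\mathbf{Set_3}$. Moreover, for every $F$-algebra $(A,\alpha)$ in $\mathbf{Met_3}^{C}$, the algebra morphisms $G_\rho\to A$ in $\mathbf{Met_3}^{C}$ are exactly the algebra morphisms $G\to A$ in $\mathbf{Set_3}$.
   Context: A tripointed set is a set with three distinct distinguished points $T,L,R$; $\mathbf{Set_3}$ is the category of tripointed sets with maps preserving $T,L,R$. A tripointed metric space is a tripointed set with a metric bounded by $1$ in which $T,L,R$ have pairwise distance $1$; $\mathbf{Met_3}^{C}$ has these as objects and continuous maps preserving $T,L,R$ as morphisms. Let $M=\{a,b,c\}$. $F=M\otimes-$: $M\otimes X$ is the quotient of $M\times X$ by the equivalence relation generated by $(b,T)\sim(a,L)$, $(a,R)\sim(c,T)$, $(c,L)\sim(b,R)$, elements written $m\otimes x$, distinguished points $a\otimes T$, $b\otimes L$, $c\otimes R$, and $(M\otimes f)(m\otimes x)=m\otimes f(x)$; in the metric setting $M\times X$ has metric $\tfrac12 d(x,y)$ within a copy and $1$ between different copies, and $M\otimes X$ has the quotient metric. An $F$-algebra is a pair $(A,\alpha\colon FA\to A)$; an algebra morphism $h\colon(A,\alpha)\to(B,\beta)$ satisfies $h\circ\alpha=\beta\circ Fh$. Concretely, $G$ consists of expressions $m_0\otimes\cdots\otimes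 m_{n-1}\otimes z$ ($n\ge0$, $m_i\in M$, $z\in\{T,L,R\}$), taken modulo the identifications induced by the relations above and by $T=a\otimes T$, $L=b\otimes L$, $R=c\otimes R$ (i.e. $G$ is the colimit in $\mathbf{Set_3}$ of $I\to FI\to F^2I\to\cdots$ with $I=\{T,L,R\}$), and $g(m\otimes w)=m\otimes w$. The discrete metric is $d(x,y)=1$ for $x\ne y$. *)

theory Defs
  imports "HOL-Analysis.Analysis"
begin

datatype m3 = Ma | Mb | Mc

definition tripointed :: "'a set \<Rightarrow> 'a \<Rightarrow> 'a \<Rightarrow> 'a \<Rightarrow> bool" where
  "tripointed X T L R \<longleftrightarrow> T \<in> X \<and> L \<in> X \<and> R \<in> X \<and> T \<noteq> L \<and> T \<noteq> R \<and> L \<noteq> R"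

definition tripointed_metric :: "'a set \<Rightarrow> 'a \<Rightarrow> 'a \<Rightarrow> 'a \<Rightarrow> ('a \<Rightarrow> 'a \<Rightarrow> real) \<Rightarrow> bool" where
  "tripointed_metric X T L R d \<longleftrightarrow> tripointed X T L R \<and> Metric_space X d
     \<and> (\<forall>x\<in>X. \<forall>y\<in>X. d x y \<le> 1) \<and> d T L = 1 \<and> d T R = 1 \<and> d L R = 1"

definition mcont :: "'a set \<Rightarrow> ('a \<Rightarrow> 'a \<Rightarrow> real) \<Rightarrow> ('b \<Rightarrow> 'b \<Rightarrow> real) \<Rightarrow> ('a \<Rightarrow> 'b) \<Rightarrow> bool" where
  "mcont X dX dY f \<longleftrightarrow> (\<forall>x\<in>X. \<forall>e>0. \<exists>\<delta>>0. \<forall>y\<in>X. dX x y < \<delta> \<longrightarrow> dY (f x) (f y) < e)"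

definition tgen :: "'a \<Rightarrow> 'a \<Rightarrow> 'a \<Rightarrow> ((m3 \<times> 'a) \<times> (m3 \<times> 'a)) set" where
  "tgen T L R = {((Mb, T), (Ma, L)), ((Ma, R), (Mc, T)), ((Mc, L), (Mb, R))}"

definition teqv :: "'a set \<Rightarrow> 'a \<Rightarrow> 'a \<Rightarrow> 'a \<Rightarrow> ((m3 \<times> 'a) \<times> (m3 \<times> 'a)) set" where
  "teqv X T L R = Id_on (UNIV \<times> X) \<union> (tgen T L R \<union> (tgen T L R)\<inverse>)\<^sup>+"

definition tens :: "'a set \<Rightarrow> 'a \<Rightarrow> 'a \<Rightarrow> 'a \<Rightarrow> (m3 \<times> 'a) set set" where
  "tens X T L R = (UNIV \<times> X) // teqv X T L R"

definition tel :: "'a set \<Rightarrow> 'a \<Rightarrow> 'a \<Rightarrow> 'a \<Rightarrow> m3 \<Rightarrow> 'a \<Rightarrow> (m3 \<times> 'a) set" where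
  "tel X T L R m x = teqv X T L R `` {(m, x)}"

definition pdist :: "('a \<Rightarrow> 'a \<Rightarrow> real) \<Rightarrow> (m3 \<times> 'a) \<Rightarrow> (m3 \<times> 'a) \<Rightarrow> real" where
  "pdist d p q = (if fst p = fst q then d (snd p) (snd q) / 2 else 1)"

definition tdist :: "'a set \<Rightarrow> 'a \<Rightarrow> 'a \<Rightarrow> 'a \<Rightarrow> ('a \<Rightarrow> 'a \<Rightarrow> real)
    \<Rightarrow> (m3 \<times> 'a) set \<Rightarrow> (m3 \<times> 'a) set \<Rightarrow> real" where
  "tdist X T L R d C D = Inf {(\<Sum>i<n. pdist d (xs ! i) (ys ! i)) | n xs ys.
      n \<ge> 1 \<and> length xs = n \<and> length ys = n
      \<and> set xs \<subseteq> UNIV \<times> X \<and> set ys \<subseteq> UNIV \<times> X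
      \<and> xs ! 0 \<in> C \<and> ys ! (n - 1) \<in> D
      \<and> (\<forall>i. i + 1 < n \<longrightarrow> (ys ! i, xs ! (i + 1)) \<in> teqv X T L R)}"

definition set_falg :: "'a set \<Rightarrow> 'a \<Rightarrow> 'a \<Rightarrow> 'a \<Rightarrow> ((m3 \<times> 'a) set \<Rightarrow> 'a) \<Rightarrow> bool" where
  "set_falg A T L R \<alpha> \<longleftrightarrow> tripointed A T L R \<and> \<alpha> \<in> tens A T L R \<rightarrow> A
     \<and> \<alpha> (tel A T L R Ma T) = T \<and> \<alpha> (tel A T L R Mb L) = L \<and> \<alpha> (tel A T L R Mc R) = R"

definition met_falg :: "'a set \<Rightarrow> 'a \<Rightarrow> 'a \<Rightarrow> 'a \<Rightarrow> ('a \<Rightarrow> 'a \<Rightarrow> real)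
    \<Rightarrow> ((m3 \<times> 'a) set \<Rightarrow> 'a) \<Rightarrow> bool" where
  "met_falg A T L R d \<alpha> \<longleftrightarrow> tripointed_metric A T L R d \<and> set_falg A T L R \<alpha>
     \<and> mcont (tens A T L R) (tdist A T L R d) d \<alpha>"

definition set_alg_morph :: "'a set \<Rightarrow> 'a \<Rightarrow> 'a \<Rightarrow> 'a \<Rightarrow> ((m3 \<times> 'a) set \<Rightarrow> 'a)
    \<Rightarrow> 'b set \<Rightarrow> 'b \<Rightarrow> 'b \<Rightarrow> 'b \<Rightarrow> ((m3 \<times> 'b) set \<Rightarrow> 'b) \<Rightarrow> ('a \<Rightarrow> 'b) \<Rightarrow> bool" where
  "set_alg_morph A TA LA RA \<alpha> B TB LB RB \<beta> h \<longleftrightarrow>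
     h \<in> A \<rightarrow> B \<and> h TA = TB \<and> h LA = LB \<and> h RA = RB
     \<and> (\<forall>m. \<forall>x\<in>A. h (\<alpha> (tel A TA LA RA m x)) = \<beta> (tel B TB LB RB m (h x)))"

definition met_alg_morph :: "'a set \<Rightarrow> 'a \<Rightarrow> 'a \<Rightarrow> 'a \<Rightarrow> ('a \<Rightarrow> 'a \<Rightarrow> real) \<Rightarrow> ((m3 \<times> 'a) set \<Rightarrow> 'a)
    \<Rightarrow> 'b set \<Rightarrow> 'b \<Rightarrow> 'b \<Rightarrow> 'b \<Rightarrow> ('b \<Rightarrow> 'b \<Rightarrow> real) \<Rightarrow> ((m3 \<times> 'b) set \<Rightarrow> 'b)
    \<Rightarrow> ('a \<Rightarrow> 'b) \<Rightarrow> bool" where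
  "met_alg_morph A TA LA RA dA \<alpha> B TB LB RB dB \<beta> h \<longleftrightarrow>
     set_alg_morph A TA LA RA \<alpha> B TB LB RB \<beta> h \<and> mcont A dA dB h"

datatype tri = zT | zL | zR

text \<open>Expressions m_0 \<otimes> ... \<otimes> m_(n-1) \<otimes> z are pairs ([m_0,...,m_(n-1)], z).
  Generating identifications: the relations applied at the innermost position
  (under any prefix w), and T = a \<otimes> T, L = b \<otimes> L, R = c \<otimes> R (under any prefix).\<close>
definition Ggen :: "((m3 list \<times> tri) \<times> (m3 list \<times> tri)) set" where
  "Ggen = {((w @ [Mb], zT), (w @ [Ma], zL)) | w. True}
        \<union> {((w @ [Ma], zR), (w @ [Mc], zT)) | w. True}
        \<union> {((w @ [Mc], zL), (w @ [Mb], zR)) | w. True}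
        \<union> {((w, zT), (w @ [Ma], zT)) | w. True}
        \<union> {((w, zL), (w @ [Mb], zL)) | w. True}
        \<union> {((w, zR), (w @ [Mc], zR)) | w. True}"

definition Geqv :: "((m3 list \<times> tri) \<times> (m3 list \<times> tri)) set" where
  "Geqv = (Ggen \<union> Ggen\<inverse>)\<^sup>*"

definition Gcls :: "m3 list \<Rightarrow> tri \<Rightarrow> (m3 list \<times> tri) set" where
  "Gcls w z = Geqv `` {(w, z)}"

definition Gset :: "(m3 list \<times> tri) set set" where
  "Gset = UNIV // Geqv"

definition GT :: "(m3 list \<times> tri) set" where "GT = Gcls [] zT"
definition GL :: "(m3 list \<times> tri) set" where "GL = Gcls [] zL"
definition GR :: "(m3 list \<times> tri) set" where "GR = Gcls [] zR"

definition gstr :: "(m3 \<times> (m3 list \<times> tri) set) set \<Rightarrow> (m3 list \<times> tri) set" where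
  "gstr C = \<Union>{Gcls (m # w) z | m w z. (m, Gcls w z) \<in> C}"

definition ddisc :: "'a \<Rightarrow> 'a \<Rightarrow> real" where
  "ddisc x y = (if x = y then 0 else 1)"

end

theory Submission
  imports Defs
begin

(* Every element of G is the class of a word m_0 ... m_(n-1) z, and g prepends a letter.  Hence an
   algebra morphism out of (G, g) must send this class to the evaluation
   alpha(m_0 (x) alpha(m_1 (x) ... z)) of the word in A; conversely this evaluation respects the
   identifications defining G, because alpha respects those defining M (x) A and fixes T, L, R.  For the metric statement, the discrete metric makes every map
   out of G_rho continuous, so metric and set-theoretic algebra morphisms out of G_rho coincide;
   and the quotient metric on M (x) G_rho is discrete at scale 1/2, since a chain of total length
   below 1/2 can only use links of length 0, which makes g continuous. *)

lemma teqv_equiv: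
  assumes "T \<in> X" "L \<in> X" "R \<in> X"
  shows "equiv (UNIV \<times> X) (teqv X T L R)"
proof -
  let ?S = "tgen T L R \<union> (tgen T L R)\<inverse>"
  have "?S \<subseteq> (UNIV \<times> X) \<times> (UNIV \<times> X)"
    using assms unfolding tgen_def by auto
  then have field: "?S\<^sup>+ \<subseteq> (UNIV \<times> X) \<times> (UNIV \<times> X)"
    by (rule trancl_subset_Sigma)
  have "sym (?S\<^sup>+)"
    by (intro sym_trancl) (auto simp: sym_def)
  moreover have "trans (?S\<^sup>+)"
    by (rule trans_trancl)
  ultimately show ?thesis
    using field unfolding teqv_def equiv_def refl_on_def sym_def trans_def by blast
qed

lemma tel_in_tens: "x \<in> X \<Longrightarrow> tel X T L R m x \<in> tens X T L R"
  unfolding tel_def tens_def by (rule quotientI) simp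

lemma tens_cases:
  assumes "C \<in> tens X T L R"
  obtains m x where "x \<in> X" "C = tel X T L R m x"
  using assms unfolding tens_def tel_def by (auto elim!: quotientE)

lemma tel_eq_if_tgen:
  assumes "tripointed X T L R" "((m, x), (m', y)) \<in> tgen T L R"
  shows "tel X T L R m x = tel X T L R m' y"
proof -
  have "((m, x), (m', y)) \<in> teqv X T L R"
    using assms(2) unfolding teqv_def by auto
  then show ?thesis
    using assms(1) teqv_equiv equiv_class_eq_iff unfolding tel_def tripointed_def by metis
qed

lemma respects_teqvI:
  assumes "f (Mb, T) = f (Ma, L)" "f (Ma, R) = f (Mc, T)" "f (Mc, L) = f (Mb, R)"
  shows "f respects teqv X T L R"
proof (rule congruentI)
  have "f p = f q" if "(p, q) \<in> (tgen T L R \<union> (tgen T L R)\<inverse>)\<^sup>+" for p q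
    using that by induction (use assms in \<open>auto simp: tgen_def\<close>)
  then show "f p = f q" if "(p, q) \<in> teqv X T L R" for p q
    using that unfolding teqv_def by blast
qed

lemma Geqv_equiv: "equiv UNIV Geqv"
  unfolding Geqv_def
  by (intro equivI refl_rtrancl sym_rtrancl trans_rtrancl) (auto simp: sym_def)

lemma Gcls_eq_iff: "Gcls w z = Gcls w' z' \<longleftrightarrow> ((w, z), (w', z')) \<in> Geqv"
  unfolding Gcls_def using equiv_class_eq_iff[OF Geqv_equiv] by auto

lemma Gcls_in_Gset: "Gcls w z \<in> Gset"
  unfolding Gcls_def Gset_def by (rule quotientI) simp

lemma Gset_cases:
  assumes "C \<in> Gset"
  obtains w z where "C = Gcls w z"
  using assms unfolding Gset_def Gcls_def by (auto elim!: quotientE)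

lemma Gcls_eq_if_Ggen: "((w, z), (w', z')) \<in> Ggen \<Longrightarrow> Gcls w z = Gcls w' z'"
  unfolding Gcls_eq_iff Geqv_def by auto

lemma respects_GeqvI:
  assumes "\<And>p q. (p, q) \<in> Ggen \<Longrightarrow> f p = f q"
  shows "f respects Geqv"
proof (rule congruentI)
  show "f p = f q" if "(p, q) \<in> Geqv" for p q
    using that unfolding Geqv_def by induction (auto dest: assms)
qed

lemma Ggen_Cons: "((w, z), (w', z')) \<in> Ggen \<Longrightarrow> ((m # w, z), (m # w', z')) \<in> Ggen"
  unfolding Ggen_def by (elim UnE CollectE exE conjE) (auto intro: exI[of _ "m # w" for w])

definition Gcons :: "m3 \<Rightarrow> (m3 list \<times> tri) set \<Rightarrow> (m3 list \<times> tri) set" where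
  "Gcons m C = (\<Union>(w, z)\<in>C. Gcls (m # w) z)"

lemma Gcons_Gcls: "Gcons m (Gcls w z) = Gcls (m # w) z"
proof -
  have "(\<lambda>(w, z). Gcls (m # w) z) respects Geqv"
    by (rule respects_GeqvI) (clarsimp intro!: Gcls_eq_if_Ggen Ggen_Cons)
  from UN_equiv_class[OF Geqv_equiv this UNIV_I, of "(w, z)"] show ?thesis
    unfolding Gcons_def Gcls_def[of w z] by simp
qed

lemma gstr_eq_UN_Gcons:
  assumes "C \<subseteq> UNIV \<times> Gset"
  shows "gstr C = (\<Union>(m, D)\<in>C. Gcons m D)"
  unfolding gstr_def
proof (intro arg_cong[where f = Union] equalityI subsetI)
  fix X assume "X \<in> {Gcls (m # w) z | m w z. (m, Gcls w z) \<in> C}"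
  then obtain m w z where "(m, Gcls w z) \<in> C" "X = Gcls (m # w) z" by blast
  then show "X \<in> (\<lambda>(m, D). Gcons m D) ` C"
    by (auto simp: Gcons_Gcls intro!: rev_image_eqI)
next
  fix X assume "X \<in> (\<lambda>(m, D). Gcons m D) ` C"
  then obtain m D where mD: "(m, D) \<in> C" "X = Gcons m D" by auto
  obtain w z where "D = Gcls w z"
    using assms mD(1) by (blast elim: Gset_cases)
  with mD have "(m, Gcls w z) \<in> C" "X = Gcls (m # w) z"
    by (simp_all add: Gcons_Gcls)
  then show "X \<in> {Gcls (m # w) z | m w z. (m, Gcls w z) \<in> C}"
    by blast
qed

lemma Ggen_intros:
  "((w @ [Mb], zT), (w @ [Ma], zL)) \<in> Ggen" "((w @ [Ma], zR), (w @ [Mc], zT)) \<in> Ggen"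
  "((w @ [Mc], zL), (w @ [Mb], zR)) \<in> Ggen" "((w, zT), (w @ [Ma], zT)) \<in> Ggen"
  "((w, zL), (w @ [Mb], zL)) \<in> Ggen" "((w, zR), (w @ [Mc], zR)) \<in> Ggen"
  unfolding Ggen_def by blast+

lemmas Gcls_generators = Ggen_intros[of "[]", THEN Gcls_eq_if_Ggen, unfolded append_Nil]

lemma G_points_in_Gset: "GT \<in> Gset" "GL \<in> Gset" "GR \<in> Gset"
  unfolding GT_def GL_def GR_def by (simp_all add: Gcls_in_Gset)

lemma gstr_tel:
  assumes "D \<in> Gset"
  shows "gstr (tel Gset GT GL GR m D) = Gcons m D"
proof -
  have eqv: "equiv (UNIV \<times> Gset) (teqv Gset GT GL GR)"
    by (rule teqv_equiv) (rule G_points_in_Gset)+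
  have resp: "(\<lambda>(m, D). Gcons m D) respects teqv Gset GT GL GR"
    unfolding GT_def GL_def GR_def
    by (rule respects_teqvI) (simp_all only: prod.case Gcons_Gcls Gcls_generators(1-3))
  have "tel Gset GT GL GR m D \<subseteq> UNIV \<times> Gset"
    using eqv unfolding tel_def equiv_def refl_on_def by blast
  then have "gstr (tel Gset GT GL GR m D) = (\<Union>(m', D')\<in>tel Gset GT GL GR m D. Gcons m' D')"
    by (rule gstr_eq_UN_Gcons)
  also have "\<dots> = Gcons m D"
    using UN_equiv_class[OF eqv resp, of "(m, D)"] assms unfolding tel_def by simp
  finally show ?thesis .
qed

(* An invariant of the identifications in G that separates the classes of T, L and R. *)
definition Gvertex :: "m3 list \<times> tri \<Rightarrow> tri option" where
  "Gvertex p = (if set (fst p) \<subseteq> {case_tri Ma Mb Mc (snd p)} then Some (snd p) else None)"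

lemma Gvertex_respects_Geqv: "Gvertex respects Geqv"
  by (rule respects_GeqvI) (auto simp: Ggen_def Gvertex_def)

lemma G_tripointed: "tripointed Gset GT GL GR"
proof -
  have "GT \<noteq> GL" "GT \<noteq> GR" "GL \<noteq> GR"
    unfolding GT_def GL_def GR_def Gcls_eq_iff
    by (auto dest: congruentD[OF Gvertex_respects_Geqv] simp: Gvertex_def)
  then show ?thesis
    unfolding tripointed_def using G_points_in_Gset by blast
qed

lemma gstr_tel_Gcls: "gstr (tel Gset GT GL GR m (Gcls w z)) = Gcls (m # w) z"
  by (simp add: gstr_tel Gcls_in_Gset Gcons_Gcls)

lemma G_set_falg: "set_falg Gset GT GL GR gstr"
  unfolding set_falg_def
proof (intro conjI)
  show "gstr \<in> tens Gset GT GL GR \<rightarrow> Gset"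
  proof
    fix C assume "C \<in> tens Gset GT GL GR"
    then obtain m D where "D \<in> Gset" "C = tel Gset GT GL GR m D"
      by (rule tens_cases)
    then show "gstr C \<in> Gset"
      by (auto simp: gstr_tel_Gcls Gcls_in_Gset elim: Gset_cases)
  qed
  show "gstr (tel Gset GT GL GR Ma GT) = GT" "gstr (tel Gset GT GL GR Mb GL) = GL"
    "gstr (tel Gset GT GL GR Mc GR) = GR"
    by (simp_all add: gstr_tel G_points_in_Gset)
      (simp_all add: GT_def GL_def GR_def Gcons_Gcls Gcls_generators(4-6)[symmetric])
qed (rule G_tripointed)

lemma mcontI_dist_zero:
  assumes "0 < \<delta>" "\<And>x y. x \<in> X \<Longrightarrow> y \<in> X \<Longrightarrow> dX x y < \<delta> \<Longrightarrow> dY (f x) (f y) = 0"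
  shows "mcont X dX dY f"
  unfolding mcont_def using assms by force

lemma mcont_ddisc:
  assumes "Metric_space A dA" "f \<in> X \<rightarrow> A"
  shows "mcont X ddisc dA f"
proof (rule mcontI_dist_zero[of 1])
  fix x y assume "x \<in> X" "ddisc x y < 1"
  then show "dA (f x) (f y) = 0"
    using assms Metric_space.zero by (fastforce simp: ddisc_def split: if_splits)
qed simp

lemma pdist_ddisc_nonneg: "0 \<le> pdist ddisc p q"
  by (simp add: pdist_def ddisc_def)

lemma pdist_ddisc_lt_half_imp_eq: "pdist ddisc p q < 1/2 \<Longrightarrow> p = q"
  by (auto simp: pdist_def ddisc_def prod_eq_iff split: if_splits)

lemma equiv_chain_nth:
  assumes "equiv A r" "set xs \<subseteq> A" "\<And>i. Suc i < length xs \<Longrightarrow> (xs ! i, xs ! Suc i) \<in> r"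
    and "k < length xs"
  shows "(xs ! 0, xs ! k) \<in> r"
  using assms(4)
proof (induction k)
  case 0
  then show ?case
    using assms(1,2) nth_mem unfolding equiv_def refl_on_def by blast
next
  case (Suc k)
  then show ?case
    using assms(1,3) unfolding equiv_def by (meson Suc_lessD transD)
qed

lemma tdist_lt_imp_chain:
  assumes eqv: "equiv (UNIV \<times> X) (teqv X T L R)"
    and "C \<in> tens X T L R" "D \<in> tens X T L R" "tdist X T L R d C D < r"
  obtains n xs ys where "n \<ge> 1" "length xs = n" "length ys = n"
    "set xs \<subseteq> UNIV \<times> X" "set ys \<subseteq> UNIV \<times> X" "xs ! 0 \<in> C" "ys ! (n - 1) \<in> D"
    "\<forall>i. i + 1 < n \<longrightarrow> (ys ! i, xs ! (i + 1)) \<in> teqv X T L R"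
    "(\<Sum>i<n. pdist d (xs ! i) (ys ! i)) < r"
proof -
  let ?S = "{(\<Sum>i<n. pdist d (xs ! i) (ys ! i)) | n xs ys.
      n \<ge> 1 \<and> length xs = n \<and> length ys = n
      \<and> set xs \<subseteq> UNIV \<times> X \<and> set ys \<subseteq> UNIV \<times> X
      \<and> xs ! 0 \<in> C \<and> ys ! (n - 1) \<in> D
      \<and> (\<forall>i. i + 1 < n \<longrightarrow> (ys ! i, xs ! (i + 1)) \<in> teqv X T L R)}"
  obtain p where p: "p \<in> UNIV \<times> X" "C = teqv X T L R `` {p}"
    using assms(2) unfolding tens_def by (rule quotientE)
  obtain q where q: "q \<in> UNIV \<times> X" "D = teqv X T L R `` {q}"
    using assms(3) unfolding tens_def by (rule quotientE)
  have "p \<in> C" "q \<in> D"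
    unfolding p(2) q(2) using equiv_class_self[OF eqv] p(1) q(1) by simp_all
  then have "pdist d p q \<in> ?S"
    using p(1) q(1) by (intro CollectI exI[of _ 1] exI[of _ "[p]"] exI[of _ "[q]"]) simp
  then have ne: "?S \<noteq> {}"
    by (rule ex_in_conv[THEN iffD1, OF exI])
  have "Inf ?S < r"
    using assms(4) unfolding tdist_def .
  from cInf_lessD[OF ne this] obtain s where "s \<in> ?S" "s < r" ..
  then show ?thesis
    using that by blast
qed

lemma tdist_ddisc_lt_half_imp_eq:
  assumes "tripointed X T L R" "C \<in> tens X T L R" "D \<in> tens X T L R"
    and "tdist X T L R ddisc C D < 1/2"
  shows "C = D"
proof -
  have eqv: "equiv (UNIV \<times> X) (teqv X T L R)"
    by (rule teqv_equiv) (use assms(1) in \<open>simp_all add: tripointed_def\<close>)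
  obtain n xs ys where chain: "n \<ge> 1" "length xs = n" "length ys = n"
      "set xs \<subseteq> UNIV \<times> X" "set ys \<subseteq> UNIV \<times> X" "xs ! 0 \<in> C" "ys ! (n - 1) \<in> D"
      "\<forall>i. i + 1 < n \<longrightarrow> (ys ! i, xs ! (i + 1)) \<in> teqv X T L R"
    and sum: "(\<Sum>i<n. pdist ddisc (xs ! i) (ys ! i)) < 1/2"
    by (rule tdist_lt_imp_chain[OF eqv assms(2-4)])
  have "xs ! i = ys ! i" if "i < n" for i
  proof (rule pdist_ddisc_lt_half_imp_eq)
    have "pdist ddisc (xs ! i) (ys ! i) \<le> (\<Sum>i<n. pdist ddisc (xs ! i) (ys ! i))"
      using that by (intro member_le_sum) (simp_all add: pdist_ddisc_nonneg)
    then show "pdist ddisc (xs ! i) (ys ! i) < 1/2"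
      using sum by linarith
  qed
  then have "xs = ys"
    using chain(2,3) by (simp add: nth_equalityI)
  then have "(xs ! 0, xs ! (n - 1)) \<in> teqv X T L R"
    using chain by (intro equiv_chain_nth[OF eqv]) auto
  then show ?thesis
    using quotient_eqI[OF eqv, of C D "xs ! 0" "xs ! (n - 1)"] assms(2,3) chain(6,7) \<open>xs = ys\<close>
    unfolding tens_def by blast
qed

lemma tripointed_metric_ddisc:
  assumes "tripointed X T L R"
  shows "tripointed_metric X T L R ddisc"
proof -
  have "Metric_space X ddisc"
    by unfold_locales (auto simp: ddisc_def)
  moreover have "ddisc T L = 1" "ddisc T R = 1" "ddisc L R = 1"
    using assms unfolding tripointed_def ddisc_def by simp_all
  moreover have "\<forall>x\<in>X. \<forall>y\<in>X. ddisc x y \<le> 1"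
    by (simp add: ddisc_def)
  ultimately show ?thesis
    using assms by (simp add: tripointed_metric_def)
qed

lemma G_met_falg: "met_falg Gset GT GL GR ddisc gstr"
  unfolding met_falg_def
proof (intro conjI)
  show "tripointed_metric Gset GT GL GR ddisc"
    using G_tripointed by (rule tripointed_metric_ddisc)
  show "mcont (tens Gset GT GL GR) (tdist Gset GT GL GR ddisc) ddisc gstr"
  proof (rule mcontI_dist_zero[of "1/2"])
    fix C D
    assume "C \<in> tens Gset GT GL GR" "D \<in> tens Gset GT GL GR"
      "tdist Gset GT GL GR ddisc C D < 1/2"
    then have "C = D"
      by (rule tdist_ddisc_lt_half_imp_eq[OF G_tripointed])
    then show "ddisc (gstr C) (gstr D) = 0"
      by (simp add: ddisc_def)
  qed simp
qed (rule G_set_falg)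

definition eval_word :: "'a set \<Rightarrow> 'a \<Rightarrow> 'a \<Rightarrow> 'a \<Rightarrow> ((m3 \<times> 'a) set \<Rightarrow> 'a) \<Rightarrow> m3 list \<Rightarrow> tri \<Rightarrow> 'a"
  where "eval_word A T L R \<alpha> w z = foldr (\<lambda>m x. \<alpha> (tel A T L R m x)) w (case_tri T L R z)"

lemma eval_word_in:
  assumes "set_falg A T L R \<alpha>"
  shows "eval_word A T L R \<alpha> w z \<in> A"
proof (induction w)
  case Nil
  then show ?case
    using assms unfolding eval_word_def set_falg_def tripointed_def by (cases z) auto
next
  case (Cons m w)
  then show ?case
    using assms tel_in_tens unfolding eval_word_def set_falg_def by fastforce
qed

lemma eval_word_respects_Geqv:
  assumes "set_falg A T L R \<alpha>"
  shows "(\<lambda>(w, z). eval_word A T L R \<alpha> w z) respects Geqv"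
proof (rule respects_GeqvI)
  have tp: "tripointed A T L R"
    using assms unfolding set_falg_def by blast
  have "\<alpha> (tel A T L R Mb T) = \<alpha> (tel A T L R Ma L)" "\<alpha> (tel A T L R Ma R) = \<alpha> (tel A T L R Mc T)"
    "\<alpha> (tel A T L R Mc L) = \<alpha> (tel A T L R Mb R)"
    by (simp_all add: tel_eq_if_tgen[OF tp] tgen_def)
  then show "(\<lambda>(w, z). eval_word A T L R \<alpha> w z) p = (\<lambda>(w, z). eval_word A T L R \<alpha> w z) q"
    if "(p, q) \<in> Ggen" for p q
    using that assms unfolding Ggen_def eval_word_def set_falg_def by auto
qed

definition Gfold :: "'a set \<Rightarrow> 'a \<Rightarrow> 'a \<Rightarrow> 'a \<Rightarrow> ((m3 \<times> 'a) set \<Rightarrow> 'a) \<Rightarrow> (m3 list \<times> tri) set \<Rightarrow> 'a"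
  where "Gfold A T L R \<alpha> C = the_elem ((\<lambda>(w, z). eval_word A T L R \<alpha> w z) ` C)"

lemma Gfold_Gcls:
  assumes "set_falg A T L R \<alpha>"
  shows "Gfold A T L R \<alpha> (Gcls w z) = eval_word A T L R \<alpha> w z"
  unfolding Gfold_def
proof (rule the_elem_image_unique)
  show "Gcls w z \<noteq> {}"
    unfolding Gcls_def using Geqv_equiv equiv_class_self by fastforce
  show "(\<lambda>(w, z). eval_word A T L R \<alpha> w z) p = eval_word A T L R \<alpha> w z" if "p \<in> Gcls w z" for p
    using congruentD[OF eval_word_respects_Geqv[OF assms], of "(w, z)" p] that
    unfolding Gcls_def by simp
qed

lemma Gfold_set_alg_morph:
  assumes "set_falg A T L R \<alpha>"
  shows "set_alg_morph Gset GT GL GR gstr A T L R \<alpha> (Gfold A T L R \<alpha>)"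
  unfolding set_alg_morph_def
proof (intro conjI allI ballI)
  show "Gfold A T L R \<alpha> \<in> Gset \<rightarrow> A"
    using eval_word_in[OF assms] by (auto simp: Gfold_Gcls[OF assms] elim: Gset_cases)
  show "Gfold A T L R \<alpha> GT = T" "Gfold A T L R \<alpha> GL = L" "Gfold A T L R \<alpha> GR = R"
    unfolding GT_def GL_def GR_def Gfold_Gcls[OF assms] by (simp_all add: eval_word_def)
  fix m x assume "x \<in> Gset"
  then obtain w z where "x = Gcls w z"
    by (rule Gset_cases)
  then show "Gfold A T L R \<alpha> (gstr (tel Gset GT GL GR m x)) = \<alpha> (tel A T L R m (Gfold A T L R \<alpha> x))"
    by (simp add: gstr_tel_Gcls Gfold_Gcls[OF assms] eval_word_def)
qed

lemma set_alg_morph_Gcls_eq_eval_word: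
  assumes "set_alg_morph Gset GT GL GR gstr A T L R \<alpha> h"
  shows "h (Gcls w z) = eval_word A T L R \<alpha> w z"
proof (induction w)
  case Nil
  then show ?case
    using assms unfolding set_alg_morph_def GT_def GL_def GR_def
    by (cases z) (simp_all add: eval_word_def)
next
  case (Cons m w)
  have "h (Gcls (m # w) z) = h (gstr (tel Gset GT GL GR m (Gcls w z)))"
    by (simp add: gstr_tel_Gcls)
  also have "\<dots> = \<alpha> (tel A T L R m (h (Gcls w z)))"
    using assms Gcls_in_Gset unfolding set_alg_morph_def by blast
  finally show ?case
    using Cons by (simp add: eval_word_def)
qed

lemma set_alg_morph_from_Gset_unique:
  assumes "set_falg A T L R \<alpha>" "set_alg_morph Gset GT GL GR gstr A T L R \<alpha> h" "x \<in> Gset"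
  shows "h x = Gfold A T L R \<alpha> x"
proof -
  from assms(3) obtain w z where "x = Gcls w z"
    by (rule Gset_cases)
  then show ?thesis
    using assms(2) by (simp add: set_alg_morph_Gcls_eq_eval_word Gfold_Gcls[OF assms(1)])
qed

lemma met_alg_morph_Gset_iff:
  assumes "met_falg A T L R dA \<alpha>"
  shows "met_alg_morph Gset GT GL GR ddisc gstr A T L R dA \<alpha> h
    \<longleftrightarrow> set_alg_morph Gset GT GL GR gstr A T L R \<alpha> h"
proof -
  have "Metric_space A dA"
    using assms unfolding met_falg_def tripointed_metric_def by blast
  then show ?thesis
    unfolding met_alg_morph_def set_alg_morph_def using mcont_ddisc by blast
qed

theorem mainTheorem3:
  shows "met_falg Gset GT GL GR ddisc gstr
    \<and> (\<forall>(A :: 'a set) TA LA RA dA \<alpha>. met_falg A TA LA RA dA \<alpha> \<longrightarrow>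
         (\<forall>h. met_alg_morph Gset GT GL GR ddisc gstr A TA LA RA dA \<alpha> h
               \<longleftrightarrow> set_alg_morph Gset GT GL GR gstr A TA LA RA \<alpha> h)
       \<and> (\<exists>h. met_alg_morph Gset GT GL GR ddisc gstr A TA LA RA dA \<alpha> h
              \<and> (\<forall>h'. met_alg_morph Gset GT GL GR ddisc gstr A TA LA RA dA \<alpha> h'
                     \<longrightarrow> (\<forall>x\<in>Gset. h' x = h x))))"
proof (intro conjI allI impI)
  show "met_falg Gset GT GL GR ddisc gstr"
    by (rule G_met_falg)
  fix A :: "'a set" and TA LA RA dA \<alpha>
  assume alg: "met_falg A TA LA RA dA \<alpha>"
  then have set_alg: "set_falg A TA LA RA \<alpha>"
    unfolding met_falg_def by blast
  note morph_iff = met_alg_morph_Gset_iff[OF alg]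
  show "met_alg_morph Gset GT GL GR ddisc gstr A TA LA RA dA \<alpha> h
    \<longleftrightarrow> set_alg_morph Gset GT GL GR gstr A TA LA RA \<alpha> h" for h
    by (rule morph_iff)
  show "\<exists>h. met_alg_morph Gset GT GL GR ddisc gstr A TA LA RA dA \<alpha> h
    \<and> (\<forall>h'. met_alg_morph Gset GT GL GR ddisc gstr A TA LA RA dA \<alpha> h' \<longrightarrow> (\<forall>x\<in>Gset. h' x = h x))"
    using Gfold_set_alg_morph[OF set_alg] set_alg_morph_from_Gset_unique[OF set_alg]
    by (intro exI[of _ "Gfold A TA LA RA \<alpha>"]) (simp add: morph_iff)
qed

end
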